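(* Let $d\in\mathbb{N}$, let $P$ be a stationary and ergodic probability measure on $\Omega=[0,1]^{\mathcal{K}^d}$, and fix an integer $0\le q<d$. For each $t\in[0,1]$ let $\widehat\beta_q(t)$ be the non-random constant such that $|\Lambda_n|^{-1}\beta_q^n(t)\to\widehat\beta_q(t)$ almost surely. Assume that for every $Q\in\mathcal{K}^d$ the function $t\mapsto P(\omega_Q\le t)$ is continuous on $[0,1]$. Let $L_q^n=\int_0^1\beta_q^n(t)\,dt$. Then $$\lim_{n\to\infty}\frac{1}{|\Lambda_n|}L_q^n=\int_0^1\widehat\beta_q(t)\,dt\quad\text{almost surely.}$$
   Context: An elementary interval is $[l,l+1]$ or $[l]=[l,l]$ with $l\in\mathbb{Z}$; an elementary cube in $\mathbb{R}^d$ is a product of $d$ elementary intervals, of dimension equal to the number of nondegenerate factors; $\mathcal{K}^d$ is the set of all elementary cubes. A cubical set is a union of elementary cubes. For a cubical set $X$, $C_k(X)$ is the free $\mathbb{Z}$-module on the $k$-dimensional elementary cubes contained in $X$ with the standard cubical boundary operator; $H_k(X)$ is the resulting homology and, for bounded $X$, $\beta_k(X)$ is the rank of the free part of $H_k(X)$. $\Omega=[0,1]^{\mathcal{K}^d}$ with product topology and Borel $\sigma$-field; $\tau_x\omega=(\omega_{-x+Q})_Q$ for $x\in\mathbb{Z}^d$; stationarity: $P\circ\tau_x^{-1}=P$ for all $x$; ergodicity: translation-invariant events have probability $0$ or $1$. $X(t)=\bigcup\{Q:\omega_Q\le t\}$, $\Lambda_n=[-n,n]^d$, $X^n(t)=X(t)\cap\Lambda_n$,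 $\beta_q^n(t)=\beta_q(X^n(t))$, $|\Lambda_n|=(2n)^d$. *)

theory Defs
  imports "HOL-Probability.Probability"
begin

text \<open>An elementary interval is encoded as a pair (l, b): b = True means [l, l+1],
  b = False means the degenerate interval [l] = [l,l].\<close>

type_synonym elint = "int \<times> bool"
type_synonym ecube = "elint list"

definition cubes :: "nat \<Rightarrow> ecube set" where
  "cubes d = {Q. length Q = d}"

definition cdim :: "ecube \<Rightarrow> nat" where
  "cdim Q = length (filter snd Q)"

definition cube_set :: "nat \<Rightarrow> ecube \<Rightarrow> real list set" where
  "cube_set d Q = {p. length p = d \<and> (\<forall>i<d. real_of_int (fst (Q!i)) \<le> p!i \<and>
       p!i \<le> real_of_int (fst (Q!i)) + (if snd (Q!i) then 1 else 0))}"

definition chains :: "nat \<Rightarrow> nat \<Rightarrow> real list set \<Rightarrow> (ecube \<Rightarrow> int) set" where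
  "chains d k X = {c. finite {Q. c Q \<noteq> 0} \<and>
      (\<forall>Q. c Q \<noteq> 0 \<longrightarrow> Q \<in> cubes d \<and> cdim Q = k \<and> cube_set d Q \<subseteq> X)}"

text \<open>Coefficient of the elementary cube P in the cubical boundary of the elementary cube Q:
  d(I x P) = dI x P + (-1)^(dim I) I x dP, with d[l,l+1] = [l+1] - [l], d[l] = 0.\<close>

definition bdcoef :: "ecube \<Rightarrow> ecube \<Rightarrow> int" where
  "bdcoef Q P = (\<Sum>i\<in>{i. i < length Q \<and> snd (Q!i)}.
      (-1) ^ card {j. j < i \<and> snd (Q!j)} *
      ((if P = Q[i := (fst (Q!i) + 1, False)] then 1 else 0)
       - (if P = Q[i := (fst (Q!i), False)] then 1 else 0)))"

definition bd :: "(ecube \<Rightarrow> int) \<Rightarrow> (ecube \<Rightarrow> int)" where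
  "bd c = (\<lambda>P. \<Sum>Q\<in>{Q. c Q \<noteq> 0}. c Q * bdcoef Q P)"

definition cycles :: "nat \<Rightarrow> nat \<Rightarrow> real list set \<Rightarrow> (ecube \<Rightarrow> int) set" where
  "cycles d k X = {c \<in> chains d k X. bd c = (\<lambda>_. 0)}"

definition boundaries :: "nat \<Rightarrow> nat \<Rightarrow> real list set \<Rightarrow> (ecube \<Rightarrow> int) set" where
  "boundaries d k X = bd ` chains d (Suc k) X"

text \<open>beta_k(X): rank of the free part of H_k(X) = Z_k/B_k, i.e. the maximal size of a
  Z-linearly independent family of homology classes.\<close>

definition betti :: "nat \<Rightarrow> nat \<Rightarrow> real list set \<Rightarrow> nat" where
  "betti d k X = Sup {card S | S. finite S \<and> S \<subseteq> cycles d k X \<and>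
      (\<forall>n :: (ecube \<Rightarrow> int) \<Rightarrow> int.
          (\<lambda>P. \<Sum>z\<in>S. n z * z P) \<in> boundaries d k X \<longrightarrow> (\<forall>z\<in>S. n z = 0))}"

definition Omega :: "nat \<Rightarrow> (ecube \<Rightarrow> real) measure" where
  "Omega d = PiM (cubes d) (\<lambda>_. restrict_space borel {0..1::real})"

definition shift_cube :: "int list \<Rightarrow> ecube \<Rightarrow> ecube" where
  "shift_cube x Q = map2 (\<lambda>(l, b) a. (l + a, b)) Q x"

definition tau :: "nat \<Rightarrow> int list \<Rightarrow> (ecube \<Rightarrow> real) \<Rightarrow> (ecube \<Rightarrow> real)" where
  "tau d x \<omega> = restrict (\<lambda>Q. \<omega> (shift_cube (map uminus x) Q)) (cubes d)"

definition stationary :: "nat \<Rightarrow> (ecube \<Rightarrow> real) measure \<Rightarrow> bool" where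
  "stationary d P \<longleftrightarrow> (\<forall>x. length x = d \<longrightarrow>
      (\<forall>A\<in>sets P. measure P (tau d x -` A \<inter> space P) = measure P A))"

definition ergodic :: "nat \<Rightarrow> (ecube \<Rightarrow> real) measure \<Rightarrow> bool" where
  "ergodic d P \<longleftrightarrow> (\<forall>A\<in>sets P.
      (\<forall>x. length x = d \<longrightarrow> tau d x -` A \<inter> space P = A) \<longrightarrow>
      measure P A = 0 \<or> measure P A = 1)"

definition Xt :: "nat \<Rightarrow> (ecube \<Rightarrow> real) \<Rightarrow> real \<Rightarrow> real list set" where
  "Xt d \<omega> t = \<Union>{cube_set d Q | Q. Q \<in> cubes d \<and> \<omega> Q \<le> t}"

definition Lam :: "nat \<Rightarrow> nat \<Rightarrow> real list set" where
  "Lam d n = {p. length p = d \<and> (\<forall>i<d. - real n \<le> p!i \<and> p!i \<le> real n)}"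

definition bettin :: "nat \<Rightarrow> nat \<Rightarrow> nat \<Rightarrow> real \<Rightarrow> (ecube \<Rightarrow> real) \<Rightarrow> nat" where
  "bettin d q n t \<omega> = betti d q (Xt d \<omega> t \<inter> Lam d n)"

end

theory Submission
  imports Defs
begin

text \<open>
  The Betti numbers of the cubical complex inside \<open>\<Lambda>\<^sub>n\<close> are bounded by the number of
  elementary cubes meeting \<open>\<Lambda>\<^sub>n\<close>, since more integer cycles than cubes are linearly dependent;
  hence the normalised Betti numbers \<open>\<beta>\<^sub>q\<^sup>n(t)/|\<Lambda>\<^sub>n|\<close> are bounded uniformly by \<open>4\<^sup>d\<close>. They are
  jointly measurable in \<open>(t, \<omega>)\<close>, because they depend only on the finitely many events
  \<open>\<omega>\<^sub>Q \<le> t\<close>. Fubini turns "for each t, almost surely" into "almost surely, for almost every t",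
  and dominated convergence in \<open>t\<close> finishes. Stationarity, ergodicity and the continuity
  hypothesis are only needed to produce the limits \<open>\<beta>\<^sub>q(t)\<close>, which the statement takes as given.
\<close>

lemma int_dependence_from_eliminated_coordinate:
  fixes v :: "'i \<Rightarrow> 'k \<Rightarrow> int"
  assumes "finite I" "i0 \<notin> I" "v i0 k \<noteq> 0"
    and c_nonzero: "\<exists>i\<in>I. c i \<noteq> 0"
    and c_dep: "\<And>x. (\<Sum>i\<in>I. c i * (v i0 k * v i x - v i k * v i0 x)) = 0"
  shows "\<exists>c'. (\<exists>i\<in>insert i0 I. c' i \<noteq> 0) \<and> (\<forall>x. (\<Sum>i\<in>insert i0 I. c' i * v i x) = 0)"
proof (intro exI conjI allI)
  define c' where "c' i = (if i = i0 then - (\<Sum>j\<in>I. c j * v j k) else c i * v i0 k)" for i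
  show "\<exists>i\<in>insert i0 I. c' i \<noteq> 0"
    using c_nonzero assms(2,3) by (auto simp: c'_def)
  fix x
  have "(\<Sum>i\<in>insert i0 I. c' i * v i x)
      = (\<Sum>i\<in>I. c i * v i0 k * v i x) - (\<Sum>i\<in>I. c i * v i k * v i0 x)"
    using assms(1,2) by (auto simp: c'_def sum_distrib_right intro!: sum.cong)
  also have "\<dots> = (\<Sum>i\<in>I. c i * (v i0 k * v i x - v i k * v i0 x))"
    by (simp add: sum_subtractf[symmetric] algebra_simps)
  finally show "(\<Sum>i\<in>insert i0 I. c' i * v i x) = 0"
    using c_dep by simp
qed

lemma int_dependent_if_card_gt_support:
  fixes v :: "'i \<Rightarrow> 'k \<Rightarrow> int"
  assumes "finite K" "finite I" "\<And>i x. i \<in> I \<Longrightarrow> x \<notin> K \<Longrightarrow> v i x = 0" "card K < card I"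
  shows "\<exists>c. (\<exists>i\<in>I. c i \<noteq> 0) \<and> (\<forall>x. (\<Sum>i\<in>I. c i * v i x) = 0)"
  using assms
proof (induction K arbitrary: I v rule: finite_induct)
  case empty
  then obtain i0 where "i0 \<in> I" by fastforce
  with empty show ?case by (intro exI[of _ "\<lambda>_. 1"]) auto
next
  case (insert k K I v)
  show ?case
  proof (cases "\<forall>i\<in>I. v i k = 0")
    case True
    then show ?thesis
      using insert by (intro insert.IH) (auto, metis insertE)
  next
    case False
    then obtain i0 where i0: "i0 \<in> I" "v i0 k \<noteq> 0" by blast
    \<comment> \<open>fraction-free elimination of the coordinate \<open>k\<close>, so that coefficients stay integral\<close>
    define w where "w i x = v i0 k * v i x - v i k * v i0 x" for i x
    have "\<exists>c. (\<exists>i\<in>I - {i0}. c i \<noteq> 0) \<and> (\<forall>x. (\<Sum>i\<in>I - {i0}. c i * w i x) = 0)"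
    proof (rule insert.IH)
      show "w i x = 0" if "i \<in> I - {i0}" "x \<notin> K" for i x
        using that insert.prems(2) i0(1) by (cases "x = k") (auto simp: w_def)
      show "card K < card (I - {i0})"
        using insert i0 by (simp add: card_Diff_singleton)
    qed (use insert.prems in auto)
    then obtain c where "\<exists>i\<in>I - {i0}. c i \<noteq> 0" "\<And>x. (\<Sum>i\<in>I - {i0}. c i * w i x) = 0"
      by blast
    from int_dependence_from_eliminated_coordinate[of "I - {i0}" i0 v k c, OF _ _ i0(2) this[unfolded w_def]]
    show ?thesis
      using insert.prems(1) i0(1) by (simp add: insert_absorb)
  qed
qed

lemma betti_le_card_support:
  assumes "finite K" and support: "\<And>c Q. c \<in> chains d q X \<Longrightarrow> c Q \<noteq> 0 \<Longrightarrow> Q \<in> K"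
  shows "betti d q X \<le> card K"
  unfolding betti_def
proof (rule cSup_least)
  show "{card S |S. finite S \<and> S \<subseteq> cycles d q X \<and>
      (\<forall>n. (\<lambda>P. \<Sum>z\<in>S. n z * z P) \<in> boundaries d q X \<longrightarrow> (\<forall>z\<in>S. n z = 0))} \<noteq> {}"
    by (auto intro!: exI[of _ "{}"])
next
  fix s assume "s \<in> {card S |S. finite S \<and> S \<subseteq> cycles d q X \<and>
      (\<forall>n. (\<lambda>P. \<Sum>z\<in>S. n z * z P) \<in> boundaries d q X \<longrightarrow> (\<forall>z\<in>S. n z = 0))}"
  then obtain S where S: "s = card S" "finite S" "S \<subseteq> cycles d q X"
    and indep: "\<And>n. (\<lambda>P. \<Sum>z\<in>S. n z * z P) \<in> boundaries d q X \<Longrightarrow> \<forall>z\<in>S. n z = 0"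
    by auto
  show "s \<le> card K"
  proof (rule ccontr)
    assume "\<not> s \<le> card K"
    with S(1) have card: "card K < card S"
      by simp
    have support_S: "z Q = 0" if "z \<in> S" "Q \<notin> K" for z Q
      using support[of z Q] that S(3) by (auto simp: cycles_def)
    obtain n where n: "\<exists>z\<in>S. n z \<noteq> 0" "\<forall>P. (\<Sum>z\<in>S. n z * z P) = 0"
      using int_dependent_if_card_gt_support[of K S "\<lambda>z. z"] \<open>finite K\<close> S(2) support_S card
      by auto
    have "(\<lambda>P. \<Sum>z\<in>S. n z * z P) = bd (\<lambda>_. 0)"
      using n(2) by (simp add: bd_def)
    moreover have "(\<lambda>_. 0) \<in> chains d (Suc q) X"
      by (simp add: chains_def)
    ultimately have "(\<lambda>P. \<Sum>z\<in>S. n z * z P) \<in> boundaries d q X"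
      by (simp add: boundaries_def)
    with indep n(1) show False by blast
  qed
qed

definition cubes_meeting :: "nat \<Rightarrow> nat \<Rightarrow> ecube set" where
  "cubes_meeting d n = {Q \<in> cubes d. cube_set d Q \<inter> Lam d n \<noteq> {}}"

lemma cubes_meeting_subset_lists:
  "cubes_meeting d n \<subseteq> {Q. set Q \<subseteq> {- int n - 1..int n} \<times> UNIV \<and> length Q = d}"
proof safe
  fix Q assume "Q \<in> cubes_meeting d n"
  then obtain p where Q: "length Q = d" and p: "p \<in> cube_set d Q" "p \<in> Lam d n"
    by (auto simp: cubes_meeting_def cubes_def)
  then show "length Q = d" by simp
  fix l b assume "(l, b) \<in> set Q"
  then obtain i where i: "i < d" "Q ! i = (l, b)"
    using Q by (auto simp: in_set_conv_nth)
  have "real_of_int l \<le> p ! i" "p ! i \<le> real_of_int l + 1" "- real n \<le> p ! i" "p ! i \<le> real n"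
    using p i by (auto simp: cube_set_def Lam_def split: if_splits)
  then show "l \<in> {- int n - 1..int n}"
    by simp
qed simp

lemma finite_cubes_meeting: "finite (cubes_meeting d n)"
  by (rule finite_subset[OF cubes_meeting_subset_lists]) (simp add: finite_lists_length_eq)

lemma card_cubes_meeting_le: "card (cubes_meeting d n) \<le> (4 * n + 4) ^ d"
proof -
  have "card (cubes_meeting d n)
      \<le> card {Q. set Q \<subseteq> {- int n - 1..int n} \<times> (UNIV :: bool set) \<and> length Q = d}"
    by (rule card_mono[OF _ cubes_meeting_subset_lists]) (simp add: finite_lists_length_eq)
  also have "\<dots> = card ({- int n - 1..int n} \<times> (UNIV :: bool set)) ^ d"
    by (simp add: card_lists_length_eq)
  also have "card ({- int n - 1..int n} \<times> (UNIV :: bool set)) = 4 * n + 4"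
    by (simp add: card_cartesian_product)
  finally show ?thesis .
qed

lemma cube_set_nonempty: "Q \<in> cubes d \<Longrightarrow> cube_set d Q \<noteq> {}"
  by (auto simp: cube_set_def cubes_def intro!: exI[of _ "map (real_of_int \<circ> fst) Q"])

lemma betti_Int_Lam_le: "betti d q (X \<inter> Lam d n) \<le> (4 * n + 4) ^ d"
proof -
  have "betti d q (X \<inter> Lam d n) \<le> card (cubes_meeting d n)"
  proof (rule betti_le_card_support[OF finite_cubes_meeting])
    fix c Q assume "c \<in> chains d q (X \<inter> Lam d n)" "c Q \<noteq> 0"
    then have "Q \<in> cubes d" "cube_set d Q \<subseteq> Lam d n"
      by (auto simp: chains_def)
    then show "Q \<in> cubes_meeting d n"
      using cube_set_nonempty[of Q d] by (auto simp: cubes_meeting_def)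
  qed
  also note card_cubes_meeting_le
  finally show ?thesis .
qed

lemma bettin_eq_betti_sublevel:
  "bettin d q n t \<omega> = betti d q (\<Union>{cube_set d Q |Q. Q \<in> {Q \<in> cubes_meeting d n. \<omega> Q \<le> t}} \<inter> Lam d n)"
  unfolding bettin_def Xt_def cubes_meeting_def by (rule arg_cong[where f="betti d q"]) blast

lemma measurable_finite_Collect:
  assumes "finite N" "\<And>Q. Q \<in> N \<Longrightarrow> Measurable.pred M (\<lambda>x. R x Q)"
  shows "(\<lambda>x. {Q \<in> N. R x Q}) \<in> measurable M (count_space (Pow N))"
proof (subst measurable_count_space_eq2, safe)
  fix A assume "A \<subseteq> N"
  then have "(\<lambda>x. {Q \<in> N. R x Q}) -` {A} \<inter> space M = {x \<in> space M. \<forall>Q\<in>N. Q \<in> A \<longleftrightarrow> R x Q}"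
    by auto
  also have "\<dots> \<in> sets M"
    using assms by (intro sets.sets_Collect_finite_All) (auto simp: pred_def[symmetric])
  finally show "(\<lambda>x. {Q \<in> N. R x Q}) -` {A} \<inter> space M \<in> sets M" .
qed (use assms in auto)

lemma measurable_coordinate_Omega:
  assumes "sets P = sets (Omega d)" "Q \<in> cubes d"
  shows "(\<lambda>\<omega>. \<omega> Q) \<in> borel_measurable P"
proof -
  have "(\<lambda>\<omega>. \<omega> Q) \<in> measurable (Omega d) (restrict_space borel {0..1::real})"
    unfolding Omega_def using assms(2) by (rule measurable_component_singleton)
  then have "(\<lambda>\<omega>. \<omega> Q) \<in> borel_measurable (Omega d)"
    by (rule measurable_compose) (simp add: measurable_restrict_space1)
  then show ?thesis
    by (simp add: measurable_cong_sets[OF assms(1) refl])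
qed

lemma measurable_bettin:
  assumes "sets P = sets (Omega d)"
  shows "(\<lambda>x. real (bettin d q n (fst x) (snd x))) \<in> borel_measurable (lborel \<Otimes>\<^sub>M P)"
proof -
  have "(\<lambda>x. {Q \<in> cubes_meeting d n. snd x Q \<le> fst x})
      \<in> measurable (lborel \<Otimes>\<^sub>M P) (count_space (Pow (cubes_meeting d n)))"
  proof (rule measurable_finite_Collect[OF finite_cubes_meeting])
    fix Q assume "Q \<in> cubes_meeting d n"
    then have [measurable]: "(\<lambda>\<omega>. \<omega> Q) \<in> borel_measurable P"
      using measurable_coordinate_Omega[OF assms] by (simp add: cubes_meeting_def)
    show "Measurable.pred (lborel \<Otimes>\<^sub>M P) (\<lambda>x. snd x Q \<le> fst x)"
      by measurable
  qed
  then show ?thesis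
    unfolding bettin_eq_betti_sublevel by (rule measurable_compose) simp
qed

lemma normalized_bettin_le:
  assumes "0 < d"
  shows "real (bettin d q n t \<omega>) / (2 * real n) ^ d \<le> 4 ^ d"
proof (cases "n = 0")
  case True
  with assms show ?thesis by (simp add: zero_power)
next
  case False
  have "real (bettin d q n t \<omega>) \<le> real ((4 * n + 4) ^ d)"
    unfolding bettin_def by (rule of_nat_mono, rule betti_Int_Lam_le)
  also have "\<dots> = (4 * real n + 4) ^ d"
    by simp
  also have "\<dots> \<le> (4 * (2 * real n)) ^ d"
    using False by (intro power_mono) auto
  also have "\<dots> = 4 ^ d * (2 * real n) ^ d"
    by (rule power_mult_distrib)
  finally show ?thesis
    using False by (subst pos_divide_le_eq) auto
qed

lemma pred_LIMSEQ_real: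
  fixes f :: "nat \<Rightarrow> 'a \<Rightarrow> real"
  assumes [measurable]: "\<And>n. f n \<in> borel_measurable M" "g \<in> borel_measurable M"
  shows "Measurable.pred M (\<lambda>x. (\<lambda>n. f n x) \<longlonglongrightarrow> g x)"
proof -
  have "(\<lambda>n. f n x) \<longlonglongrightarrow> g x \<longleftrightarrow> Cauchy (\<lambda>n. f n x) \<and> lim (\<lambda>n. f n x) = g x" for x
    by (metis Cauchy_convergent_iff convergent_LIMSEQ_iff limI)
  then show ?thesis
    by (simp only: pred_def) measurable
qed

lemma limit_function_measurable_on:
  fixes f :: "nat \<Rightarrow> real \<Rightarrow> 'a \<Rightarrow> real"
  assumes "prob_space P"
    and f_meas: "\<And>n. (\<lambda>x. f n (fst x) (snd x)) \<in> borel_measurable (lborel \<Otimes>\<^sub>M P)"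
    and f_lim: "\<And>t. t \<in> A \<Longrightarrow> AE \<omega> in P. (\<lambda>n. f n t \<omega>) \<longlonglongrightarrow> g t"
  obtains h where "h \<in> borel_measurable lborel" "\<And>t. t \<in> A \<Longrightarrow> h t = g t"
proof
  interpret P: prob_space P by fact
  define h where "h t = (\<integral>\<omega>. lim (\<lambda>n. f n t \<omega>) \<partial>P)" for t
  have lim_meas: "(\<lambda>x. lim (\<lambda>n. f n (fst x) (snd x))) \<in> borel_measurable (lborel \<Otimes>\<^sub>M P)"
    using f_meas by measurable
  show "h \<in> borel_measurable lborel"
    unfolding h_def by (rule P.borel_measurable_lebesgue_integral) (simp add: case_prod_beta' lim_meas)
  fix t assume t: "t \<in> A"
  have "(\<lambda>\<omega>. lim (\<lambda>n. f n t \<omega>)) \<in> borel_measurable P"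
    using measurable_compose[OF measurable_Pair1' lim_meas] by simp
  moreover have "AE \<omega> in P. lim (\<lambda>n. f n t \<omega>) = g t"
    using f_lim[OF t] by eventually_elim (rule limI)
  ultimately have "h t = (\<integral>\<omega>. g t \<partial>P)"
    unfolding h_def by (intro integral_cong_AE) auto
  then show "h t = g t"
    by (simp add: P.prob_space)
qed

lemma AE_tendsto_set_integral:
  fixes f :: "nat \<Rightarrow> real \<Rightarrow> 'a \<Rightarrow> real"
  assumes "prob_space P"
    and A: "A \<in> sets lborel" "emeasure lborel A < \<infinity>"
    and f_meas: "\<And>n. (\<lambda>x. f n (fst x) (snd x)) \<in> borel_measurable (lborel \<Otimes>\<^sub>M P)"
    and f_bound: "\<And>n t \<omega>. \<bar>f n t \<omega>\<bar> \<le> C"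
    and f_lim: "\<And>t. t \<in> A \<Longrightarrow> AE \<omega> in P. (\<lambda>n. f n t \<omega>) \<longlonglongrightarrow> g t"
  shows "AE \<omega> in P. (\<lambda>n. LINT t:A|lborel. f n t \<omega>) \<longlonglongrightarrow> (LINT t:A|lborel. g t)"
proof -
  interpret P: prob_space P by fact
  interpret pair_sigma_finite lborel P
    by (intro pair_sigma_finite.intro lborel.sigma_finite_measure_axioms P.sigma_finite_measure_axioms)
  obtain h where h_meas[measurable]: "h \<in> borel_measurable lborel" and h_eq: "\<And>t. t \<in> A \<Longrightarrow> h t = g t"
    using limit_function_measurable_on[OF \<open>prob_space P\<close> f_meas f_lim] by blast
  have [measurable]: "A \<in> sets lborel" "\<And>n. (\<lambda>x. f n (fst x) (snd x)) \<in> borel_measurable (lborel \<Otimes>\<^sub>M P)"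
    using A f_meas by auto
  have "AE t in lborel. AE \<omega> in P. t \<in> A \<longrightarrow> (\<lambda>n. f n t \<omega>) \<longlonglongrightarrow> h t"
  proof (rule AE_I2)
    fix t
    show "AE \<omega> in P. t \<in> A \<longrightarrow> (\<lambda>n. f n t \<omega>) \<longlonglongrightarrow> h t"
      using f_lim h_eq by (cases "t \<in> A") simp_all
  qed
  moreover have "Measurable.pred (lborel \<Otimes>\<^sub>M P)
      (\<lambda>x. fst x \<in> A \<longrightarrow> (\<lambda>n. f n (fst x) (snd x)) \<longlonglongrightarrow> h (fst x))"
    by (intro pred_intros_logic pred_LIMSEQ_real) measurable
  ultimately have "AE \<omega> in P. AE t in lborel. t \<in> A \<longrightarrow> (\<lambda>n. f n t \<omega>) \<longlonglongrightarrow> h t"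
    by (subst (asm) AE_commute) (simp_all add: pred_def)
  with AE_space show ?thesis
  proof eventually_elim
    case (elim \<omega>)
    have [measurable]: "(\<lambda>t. f n t \<omega>) \<in> borel_measurable lborel" for n
      using measurable_compose[OF measurable_Pair2' f_meas] elim(1) by simp
    have "(\<lambda>n. LINT t:A|lborel. f n t \<omega>) \<longlonglongrightarrow> (LINT t:A|lborel. h t)"
      unfolding set_lebesgue_integral_def
    proof (rule integral_dominated_convergence[where w="\<lambda>t. C * indicator A t"])
      show "integrable lborel (\<lambda>t. C * indicator A t)"
        using A by (intro integrable_mult_right integrable_real_indicator)
      show "AE t in lborel. (\<lambda>n. indicator A t *\<^sub>R f n t \<omega>) \<longlonglongrightarrow> indicator A t *\<^sub>R h t"
        using elim(2) by eventually_elim (auto split: split_indicator)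
      show "AE t in lborel. norm (indicator A t *\<^sub>R f n t \<omega>) \<le> C * indicator A t" for n
        using f_bound by (intro AE_I2) (auto split: split_indicator)
      show "(\<lambda>t. indicator A t *\<^sub>R f n t \<omega>) \<in> borel_measurable lborel" for n
        by measurable
      show "(\<lambda>t. indicator A t *\<^sub>R h t) \<in> borel_measurable lborel"
        by measurable
    qed
    also have "(LINT t:A|lborel. h t) = (LINT t:A|lborel. g t)"
      using A(1) h_eq by (intro set_lebesgue_integral_cong) auto
    finally show ?case .
  qed
qed

theorem corollary2p10:
  fixes d q :: nat and P :: "(ecube \<Rightarrow> real) measure" and bhat :: "real \<Rightarrow> real"
  assumes "prob_space P"
    and "sets P = sets (Omega d)"
    and "stationary d P"
    and "ergodic d P"
    and "q < d"
    and "\<forall>t\<in>{0..1}. AE \<omega> in P.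
           (\<lambda>n. real (bettin d q n t \<omega>) / (2 * real n) ^ d) \<longlonglongrightarrow> bhat t"
    and "\<forall>Q\<in>cubes d. continuous_on {0..1} (\<lambda>t. measure P {\<omega> \<in> space P. \<omega> Q \<le> t})"
  shows "AE \<omega> in P.
           (\<lambda>n. (LBINT t=0..1. real (bettin d q n t \<omega>)) / (2 * real n) ^ d)
             \<longlonglongrightarrow> (LBINT t=0..1. bhat t)"
proof -
  define f where "f n t \<omega> = real (bettin d q n t \<omega>) / (2 * real n) ^ d" for n t \<omega>
  have "AE \<omega> in P. (\<lambda>n. LINT t:{0..1}|lborel. f n t \<omega>) \<longlonglongrightarrow> (LINT t:{0..1}|lborel. bhat t)"
  proof (rule AE_tendsto_set_integral[OF assms(1)])
    show "(\<lambda>x. f n (fst x) (snd x)) \<in> borel_measurable (lborel \<Otimes>\<^sub>M P)" for n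
      unfolding f_def by (intro borel_measurable_divide measurable_bettin[OF assms(2)]) simp
    show "\<bar>f n t \<omega>\<bar> \<le> 4 ^ d" for n t \<omega>
      using normalized_bettin_le[of d] assms(5) unfolding f_def by simp
    show "AE \<omega> in P. (\<lambda>n. f n t \<omega>) \<longlonglongrightarrow> bhat t" if "t \<in> {0..1}" for t
      using assms(6) that unfolding f_def by blast
  qed auto
  moreover have "(LBINT t=0..1. u t) = (LBINT t:{0..1}. u t)" for u :: "real \<Rightarrow> real"
    using interval_integral_Icc[of 0 1 u] by (simp add: zero_ereal_def one_ereal_def)
  ultimately show ?thesis
    by (simp add: f_def)
qed

end
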